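(* Let $<_{st}$ and $<_{wk}$ be two strict partial orders on the same set $D$ such that $<_{st}$ extends $<_{wk}$. Then the following two conditions are equivalent: $( * )$ for every $k$ there exists a $<_{st}$-chain with $k$ elements which is a $<_{wk}$-antichain; $(\dagger)$ for every $k$ there exists a finite $<_{st}$-chain $X$ which is not the union of $k$ $<_{wk}$-chains. *)

theory Defs
  imports Main
begin

definition strict_po_on :: "'a set \<Rightarrow> ('a \<Rightarrow> 'a \<Rightarrow> bool) \<Rightarrow> bool" where
  "strict_po_on D r \<longleftrightarrow>
     (\<forall>x\<in>D. \<not> r x x) \<and>
     (\<forall>x\<in>D. \<forall>y\<in>D. \<forall>z\<in>D. r x y \<longrightarrow> r y z \<longrightarrow> r x z)"

definition is_chain_on :: "('a \<Rightarrow> 'a \<Rightarrow> bool) \<Rightarrow> 'a set \<Rightarrow> bool" where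
  "is_chain_on r X \<longleftrightarrow> (\<forall>x\<in>X. \<forall>y\<in>X. x \<noteq> y \<longrightarrow> r x y \<or> r y x)"

definition is_antichain_on :: "('a \<Rightarrow> 'a \<Rightarrow> bool) \<Rightarrow> 'a set \<Rightarrow> bool" where
  "is_antichain_on r X \<longleftrightarrow> (\<forall>x\<in>X. \<forall>y\<in>X. \<not> r x y)"

text \<open>X is the union of k chains (chains may be empty).\<close>
definition union_of_k_chains :: "('a \<Rightarrow> 'a \<Rightarrow> bool) \<Rightarrow> nat \<Rightarrow> 'a set \<Rightarrow> bool" where
  "union_of_k_chains r k X \<longleftrightarrow>
     (\<exists>C :: nat \<Rightarrow> 'a set. (\<forall>i<k. is_chain_on r (C i)) \<and> X = (\<Union>i<k. C i))"

end

theory Submission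
  imports Defs
begin

text \<open>A k-element st-chain that is a wk-antichain cannot be covered by fewer than k wk-chains,
  since each wk-chain contains at most one of its elements. Conversely, by Dilworth's theorem a
  finite set that is not a union of k wk-chains contains a wk-antichain with more than k
  elements, and subsets of an st-chain are again st-chains. Dilworth's theorem is proved
  following Galvin: remove a maximal element a, cover the rest by as many chains as its width,
  and either a extends the antichain of chain tops, or a lies above some top and together with
  everything below that top in its chain forms a chain whose removal lowers the width.\<close>

lemma chain_on_subset: "is_chain_on r X \<Longrightarrow> Y \<subseteq> X \<Longrightarrow> is_chain_on r Y"
  unfolding is_chain_on_def by blast

lemma antichain_on_subset: "is_antichain_on r X \<Longrightarrow> Y \<subseteq> X \<Longrightarrow> is_antichain_on r Y"
  unfolding is_antichain_on_def by blast

lemma strict_po_on_irrefl: "strict_po_on D r \<Longrightarrow> x \<in> D \<Longrightarrow> \<not> r x x"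
  unfolding strict_po_on_def by blast

lemma strict_po_on_trans:
  "strict_po_on D r \<Longrightarrow> x \<in> D \<Longrightarrow> y \<in> D \<Longrightarrow> z \<in> D \<Longrightarrow> r x y \<Longrightarrow> r y z \<Longrightarrow> r x z"
  unfolding strict_po_on_def by blast

lemma strict_po_on_finite_has_maximal:
  assumes po: "strict_po_on D r" and "finite S" "S \<noteq> {}" "S \<subseteq> D"
  shows "\<exists>x\<in>S. \<forall>y\<in>S. \<not> r x y"
  using assms(2-4)
proof (induction S rule: finite_ne_induct)
  case (singleton x)
  then show ?case using strict_po_on_irrefl[OF po] by auto
next
  case (insert b F)
  then obtain m where m: "m \<in> F" "\<forall>y\<in>F. \<not> r m y" by auto
  show ?case
  proof (cases "r m b")
    case True
    have "\<not> r b y" if "y \<in> insert b F" for y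
    proof
      assume "r b y"
      from that show False
      proof
        assume "y = b"
        then show False using \<open>r b y\<close> insert.prems strict_po_on_irrefl[OF po] by blast
      next
        assume "y \<in> F"
        then have "r m y"
          using True \<open>r b y\<close> m(1) insert.prems strict_po_on_trans[OF po] by blast
        then show False using m(2) \<open>y \<in> F\<close> by blast
      qed
    qed
    then show ?thesis by blast
  next
    case False
    then show ?thesis using m by blast
  qed
qed

lemma union_of_k_chains_empty: "union_of_k_chains r k {}"
  unfolding union_of_k_chains_def is_chain_on_def by (intro exI[of _ "\<lambda>_. {}"]) auto

lemma union_of_k_chains_mono:
  assumes "union_of_k_chains r k X" "k \<le> m"
  shows "union_of_k_chains r m X"
proof -
  obtain C where C: "\<forall>i<k. is_chain_on r (C i)" "X = (\<Union>i<k. C i)"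
    using assms(1) unfolding union_of_k_chains_def by blast
  let ?C = "\<lambda>i. if i < k then C i else {}"
  have "\<forall>i<m. is_chain_on r (?C i)" using C(1) by (auto simp: is_chain_on_def)
  moreover have "X = (\<Union>i<m. ?C i)"
  proof
    show "X \<subseteq> (\<Union>i<m. ?C i)"
    proof
      fix x assume "x \<in> X"
      then obtain i where "i < k" "x \<in> C i" using C(2) by blast
      then show "x \<in> (\<Union>i<m. ?C i)" using assms(2) by (intro UN_I[of i]) auto
    qed
  qed (use C(2) in \<open>auto split: if_splits\<close>)
  ultimately show ?thesis unfolding union_of_k_chains_def by (intro exI[of _ ?C]) blast
qed

lemma union_of_k_chains_Suc:
  assumes "union_of_k_chains r k (X - K)" "is_chain_on r K" "K \<subseteq> X"
  shows "union_of_k_chains r (Suc k) X"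
proof -
  obtain C where C: "\<forall>i<k. is_chain_on r (C i)" "X - K = (\<Union>i<k. C i)"
    using assms(1) unfolding union_of_k_chains_def by blast
  define C' where "C' = C(k := K)"
  have chains: "\<forall>i<Suc k. is_chain_on r (C' i)" using C(1) assms(2) by (auto simp: C'_def less_Suc_eq)
  have "(\<Union>i<Suc k. C' i) = (\<Union>i<k. C i) \<union> K" by (auto simp: C'_def lessThan_Suc)
  then have "X = (\<Union>i<Suc k. C' i)" using C(2) assms(3) by auto
  with chains show ?thesis unfolding union_of_k_chains_def by blast
qed

lemma union_of_k_chains_disjoint:
  assumes "union_of_k_chains r k X"
  obtains C where "\<forall>i<k. is_chain_on r (C i)" "X = (\<Union>i<k. C i)"
    "\<forall>i<k. \<forall>j<k. i \<noteq> j \<longrightarrow> C i \<inter> C j = {}"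
proof -
  obtain C where C: "\<forall>i<k. is_chain_on r (C i)" "X = (\<Union>i<k. C i)"
    using assms unfolding union_of_k_chains_def by blast
  define C' where "C' i = C i - (\<Union>j<i. C j)" for i
  have "\<forall>i<k. is_chain_on r (C' i)" using C(1) chain_on_subset unfolding C'_def by blast
  moreover have "X = (\<Union>i<k. C' i)"
  proof
    show "X \<subseteq> (\<Union>i<k. C' i)"
    proof
      fix x assume "x \<in> X"
      then obtain i where i: "i < k" "x \<in> C i" using C(2) by auto
      define n where "n = (LEAST n. x \<in> C n)"
      have "x \<in> C n" "n \<le> i" "\<forall>j<n. x \<notin> C j"
        using i(2) unfolding n_def by (auto intro: LeastI Least_le dest: not_less_Least)
      then show "x \<in> (\<Union>i<k. C' i)" using i(1) unfolding C'_def by auto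
    qed
  qed (use C(2) in \<open>auto simp: C'_def\<close>)
  moreover have "\<forall>i<k. \<forall>j<k. i \<noteq> j \<longrightarrow> C' i \<inter> C' j = {}"
  proof (intro allI impI)
    fix i j assume "i < k" "j < k" "i \<noteq> j"
    then consider "i < j" | "j < i" by linarith
    then show "C' i \<inter> C' j = {}" unfolding C'_def by cases blast+
  qed
  ultimately show ?thesis using that by blast
qed

lemma card_chain_Int_antichain_le_1:
  assumes "is_chain_on r C" "is_antichain_on r A"
  shows "card (A \<inter> C) \<le> 1"
proof -
  have "\<forall>x\<in>A \<inter> C. \<forall>y\<in>A \<inter> C. x = y"
    using assms unfolding is_chain_on_def is_antichain_on_def by blast
  then show ?thesis by (cases "finite (A \<inter> C)") (auto simp: card_le_Suc0_iff_eq)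
qed

lemma card_antichain_le_number_of_chains:
  assumes "is_antichain_on r A" "A \<subseteq> (\<Union>i\<in>I. C i)" "finite I" "\<forall>i\<in>I. is_chain_on r (C i)"
  shows "card A \<le> card I"
proof -
  have "A = (\<Union>i\<in>I. A \<inter> C i)" using assms(2) by blast
  then have "card A \<le> (\<Sum>i\<in>I. card (A \<inter> C i))" by (metis card_UN_le assms(3))
  also have "\<dots> \<le> (\<Sum>i\<in>I. 1)"
    using assms(1,4) by (intro sum_mono card_chain_Int_antichain_le_1) auto
  finally show ?thesis by simp
qed

lemma antichain_meets_every_chain:
  assumes "is_antichain_on r A" "A \<subseteq> (\<Union>i<k. C i)" "\<forall>i<k. is_chain_on r (C i)"
    and "card A = k" "j < k"
  shows "A \<inter> C j \<noteq> {}"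
proof
  assume "A \<inter> C j = {}"
  then have "A \<subseteq> (\<Union>i\<in>{..<k} - {j}. C i)" using assms(2) by blast
  then have "card A \<le> card ({..<k} - {j})"
    using assms(1,3) by (intro card_antichain_le_number_of_chains) auto
  then show False using assms(4,5) by simp
qed

text \<open>Only meaningful for finite X; otherwise Max is applied to an infinite set.\<close>

definition width :: "('a \<Rightarrow> 'a \<Rightarrow> bool) \<Rightarrow> 'a set \<Rightarrow> nat" where
  "width r X = Max {card A | A. A \<subseteq> X \<and> is_antichain_on r A}"

lemma
  assumes "finite X"
  shows card_antichain_le_width: "A \<subseteq> X \<Longrightarrow> is_antichain_on r A \<Longrightarrow> card A \<le> width r X"
    and width_attained: "\<exists>A\<subseteq>X. is_antichain_on r A \<and> card A = width r X"
proof -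
  have fin: "finite {card A | A. A \<subseteq> X \<and> is_antichain_on r A}"
    by (rule finite_subset[of _ "{..card X}"]) (auto intro: card_mono[OF assms])
  have ne: "{card A | A. A \<subseteq> X \<and> is_antichain_on r A} \<noteq> {}"
    unfolding is_antichain_on_def by blast
  show "A \<subseteq> X \<Longrightarrow> is_antichain_on r A \<Longrightarrow> card A \<le> width r X"
    unfolding width_def using fin by (intro Max_ge) auto
  show "\<exists>A\<subseteq>X. is_antichain_on r A \<and> card A = width r X"
    using Max_in[OF fin ne] unfolding width_def by auto
qed

lemma width_mono:
  assumes "finite Y" "X \<subseteq> Y"
  shows "width r X \<le> width r Y"
proof -
  obtain A where A: "A \<subseteq> X" "is_antichain_on r A" "card A = width r X"
    using width_attained[OF finite_subset[OF assms(2,1)]] by blast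
  have "card A \<le> width r Y"
    using A(1,2) assms(2) by (intro card_antichain_le_width[OF assms(1)]) auto
  then show ?thesis using A(3) by simp
qed

lemma width_le_if_union_of_k_chains:
  assumes "finite X" "union_of_k_chains r k X"
  shows "width r X \<le> k"
proof -
  obtain A where "A \<subseteq> X" "is_antichain_on r A" "card A = width r X"
    using width_attained[OF assms(1)] by blast
  moreover obtain C where "\<forall>i<k. is_chain_on r (C i)" "X = (\<Union>i<k. C i)"
    using assms(2) unfolding union_of_k_chains_def by blast
  ultimately have "card A \<le> card {..<k}"
    by (intro card_antichain_le_number_of_chains[where C = C]) auto
  then show ?thesis using \<open>card A = width r X\<close> by simp
qed

lemma width_Diff_less:
  assumes "finite X" "K \<subseteq> X"
    and meets: "\<And>B. B \<subseteq> X \<Longrightarrow> is_antichain_on r B \<Longrightarrow> card B = width r X \<Longrightarrow> B \<inter> K \<noteq> {}"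
  shows "width r (X - K) < width r X"
proof (rule ccontr)
  assume "\<not> width r (X - K) < width r X"
  moreover have "width r (X - K) \<le> width r X" using width_mono[OF assms(1)] by blast
  moreover obtain B where "B \<subseteq> X - K" "is_antichain_on r B" "card B = width r (X - K)"
    using width_attained[of "X - K"] assms(1) by blast
  ultimately show False using meets[of B] by auto
qed

text \<open>t i is the largest element of the chain C i lying in some maximum antichain.\<close>

lemma chain_cover_tops:
  assumes po: "strict_po_on D r" and X: "finite X" "X \<subseteq> D"
    and C: "\<forall>i<width r X. is_chain_on r (C i)" "X = (\<Union>i<width r X. C i)"
  obtains t where "\<forall>i<width r X. t i \<in> C i" "is_antichain_on r (t ` {..<width r X})"
    "\<And>B i. B \<subseteq> X \<Longrightarrow> is_antichain_on r B \<Longrightarrow> card B = width r X \<Longrightarrow> i < width r X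
      \<Longrightarrow> B \<inter> {z \<in> C i. z = t i \<or> r z (t i)} \<noteq> {}"
proof -
  define w where "w = width r X"
  define M where "M = {B. B \<subseteq> X \<and> is_antichain_on r B \<and> card B = w}"
  have meet: "B \<inter> C i \<noteq> {}" if "B \<in> M" "i < w" for B i
  proof -
    have B: "is_antichain_on r B" "B \<subseteq> (\<Union>i<w. C i)" "card B = w"
      using that(1) C(2) unfolding M_def w_def by auto
    show ?thesis using antichain_meets_every_chain[OF B(1,2) C(1)[folded w_def] B(3) that(2)] .
  qed
  have "M \<noteq> {}" using width_attained[OF X(1)] unfolding M_def w_def by blast
  define S where "S i = C i \<inter> \<Union>M" for i
  have "\<exists>y\<in>S i. \<forall>z\<in>S i. \<not> r y z" if "i < w" for i
  proof (rule strict_po_on_finite_has_maximal[OF po])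
    have "S i \<subseteq> X" using C(2) that unfolding S_def w_def by blast
    then show "finite (S i)" "S i \<subseteq> D" using X finite_subset by blast+
    show "S i \<noteq> {}" using meet \<open>M \<noteq> {}\<close> that unfolding S_def by blast
  qed
  then obtain t where t: "\<And>i. i < w \<Longrightarrow> t i \<in> S i \<and> (\<forall>z\<in>S i. \<not> r (t i) z)" by metis
  have below: "y = t i \<or> r y (t i)" if "B \<in> M" "i < w" "y \<in> B" "y \<in> C i" for B i y
  proof -
    have "y \<in> S i" using that unfolding S_def by blast
    then show ?thesis using t[OF that(2)] C(1) that(2,4) unfolding S_def is_chain_on_def w_def by blast
  qed
  have "is_antichain_on r (t ` {..<w})"
    unfolding is_antichain_on_def
  proof (intro ballI notI)
    fix u v assume "u \<in> t ` {..<w}" "v \<in> t ` {..<w}" "r u v"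
    then obtain i j where i: "i < w" and j: "j < w" and r_ij: "r (t i) (t j)" by blast
    obtain B where B: "B \<in> M" "t j \<in> B" using t[OF j] unfolding S_def by blast
    obtain z where z: "z \<in> B" "z \<in> C i" using meet[OF B(1) i] by blast
    have "B \<subseteq> D" "is_antichain_on r B" using B(1) X(2) unfolding M_def by blast+
    have "t i \<in> D" using t[OF i] X(2) unfolding S_def M_def by blast
    from below[OF B(1) i z] show False
    proof
      assume "z = t i"
      then show False using \<open>is_antichain_on r B\<close> z(1) B(2) r_ij unfolding is_antichain_on_def by blast
    next
      assume "r z (t i)"
      then have "r z (t j)"
        using r_ij z(1) B(2) \<open>B \<subseteq> D\<close> \<open>t i \<in> D\<close> strict_po_on_trans[OF po] by blast
      then show False using \<open>is_antichain_on r B\<close> z(1) B(2) unfolding is_antichain_on_def by blast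
    qed
  qed
  moreover have "\<forall>i<w. t i \<in> C i" using t unfolding S_def by blast
  moreover have "B \<inter> {z \<in> C i. z = t i \<or> r z (t i)} \<noteq> {}"
    if "B \<subseteq> X" "is_antichain_on r B" "card B = w" "i < w" for B i
  proof -
    have "B \<in> M" using that unfolding M_def by blast
    then show ?thesis using meet[of B i] below[of B i] that(4) by blast
  qed
  ultimately show thesis using that unfolding w_def by blast
qed

lemma dilworth_step:
  assumes po: "strict_po_on D r" and X: "finite X" "X \<subseteq> D"
    and a: "a \<in> X" "\<forall>y\<in>X. \<not> r a y"
    and IH: "\<And>Y. Y \<subset> X \<Longrightarrow> union_of_k_chains r (width r Y) Y"
  shows "union_of_k_chains r (width r X) X"
proof -
  define w where "w = width r (X - {a})"
  have X': "finite (X - {a})" "X - {a} \<subseteq> D" using X by auto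
  have w_le: "w \<le> width r X" unfolding w_def using X(1) by (intro width_mono) auto
  have "union_of_k_chains r w (X - {a})" unfolding w_def using a(1) by (intro IH) blast
  then obtain C where C: "\<forall>i<w. is_chain_on r (C i)" "X - {a} = (\<Union>i<w. C i)"
      "\<forall>i<w. \<forall>j<w. i \<noteq> j \<longrightarrow> C i \<inter> C j = {}"
    by (rule union_of_k_chains_disjoint)
  obtain t where t_in: "\<forall>i<w. t i \<in> C i" and t_antichain: "is_antichain_on r (t ` {..<w})"
    and t_meets: "\<And>B i. B \<subseteq> X - {a} \<Longrightarrow> is_antichain_on r B \<Longrightarrow> card B = w \<Longrightarrow> i < w
      \<Longrightarrow> B \<inter> {z \<in> C i. z = t i \<or> r z (t i)} \<noteq> {}"
    using chain_cover_tops[OF po X', of C] C(1,2) unfolding w_def by blast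
  show ?thesis
  proof (cases "\<exists>i<w. r (t i) a")
    case True
    then obtain i where i: "i < w" "r (t i) a" by blast
    define L where "L = {z \<in> C i. z = t i \<or> r z (t i)}"
    have L: "L \<subseteq> X - {a}" "L \<subseteq> D" using C(2) X' i(1) unfolding L_def by blast+
    have "t i \<in> D" "a \<in> D" using t_in i(1) C(2) X' a(1) X(2) by blast+
    have "r z a" if "z \<in> L" for z
    proof -
      have "z = t i \<or> r z (t i)" using that unfolding L_def by blast
      then show ?thesis
        using i(2) strict_po_on_trans[OF po _ \<open>t i \<in> D\<close> \<open>a \<in> D\<close>] that L(2) by blast
    qed
    moreover have "is_chain_on r L"
      using C(1) i(1) chain_on_subset[of r "C i" L] unfolding L_def by blast
    ultimately have chain: "is_chain_on r (insert a L)" unfolding is_chain_on_def by blast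
    have "width r (X - {a} - L) < w"
      unfolding w_def using X'(1) L(1) t_meets[of _ i] i(1)
      by (intro width_Diff_less) (auto simp: L_def w_def)
    moreover have "X - insert a L = X - {a} - L" by blast
    ultimately have "width r (X - insert a L) \<le> w - 1" by simp
    moreover have "union_of_k_chains r (width r (X - insert a L)) (X - insert a L)"
      using a(1) by (intro IH) blast
    ultimately have "union_of_k_chains r (w - 1) (X - insert a L)"
      by (rule union_of_k_chains_mono[rotated])
    then have "union_of_k_chains r (Suc (w - 1)) X"
      using chain L(1) a(1) by (intro union_of_k_chains_Suc) auto
    then show ?thesis using i(1) w_le union_of_k_chains_mono by fastforce
  next
    case False
    have "inj_on t {..<w}" using t_in C(3) by (intro inj_onI) (metis disjoint_iff lessThan_iff)
    moreover have "a \<notin> t ` {..<w}" using t_in C(2) by blast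
    ultimately have "card (insert a (t ` {..<w})) = Suc w" by (simp add: card_image)
    moreover have "is_antichain_on r (insert a (t ` {..<w}))"
      using t_antichain False a t_in C(2) unfolding is_antichain_on_def by blast
    moreover have "insert a (t ` {..<w}) \<subseteq> X" using a(1) t_in C(2) by blast
    ultimately have "Suc w \<le> width r X" using card_antichain_le_width[OF X(1)] by metis
    moreover have "union_of_k_chains r (Suc w) X"
      using \<open>union_of_k_chains r w (X - {a})\<close> a(1)
      by (intro union_of_k_chains_Suc[where K = "{a}"]) (auto simp: is_chain_on_def)
    ultimately show ?thesis using union_of_k_chains_mono by blast
  qed
qed

theorem dilworth:
  assumes po: "strict_po_on D r"
  shows "finite X \<Longrightarrow> X \<subseteq> D \<Longrightarrow> union_of_k_chains r (width r X) X"
proof (induction "card X" arbitrary: X rule: less_induct)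
  case less
  show ?case
  proof (cases "X = {}")
    case True
    then show ?thesis by (simp add: union_of_k_chains_empty)
  next
    case False
    then obtain a where "a \<in> X" "\<forall>y\<in>X. \<not> r a y"
      using strict_po_on_finite_has_maximal[OF po less.prems(1) _ less.prems(2)] by blast
    moreover have "union_of_k_chains r (width r Y) Y" if "Y \<subset> X" for Y
      using psubset_card_mono[OF less.prems(1) that] that less.prems
      by (intro less.hyps) (auto intro: finite_subset)
    ultimately show ?thesis using dilworth_step[OF po less.prems] by blast
  qed
qed

corollary union_of_k_chains_iff_width_le:
  assumes "strict_po_on D r" "finite X" "X \<subseteq> D"
  shows "union_of_k_chains r k X \<longleftrightarrow> width r X \<le> k"
  using width_le_if_union_of_k_chains[OF assms(2)] union_of_k_chains_mono[OF dilworth[OF assms]]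
  by blast

theorem mainTheorem15:
  fixes D :: "'a set" and st wk :: "'a \<Rightarrow> 'a \<Rightarrow> bool"
  assumes "strict_po_on D st" and "strict_po_on D wk"
    and "\<forall>x\<in>D. \<forall>y\<in>D. wk x y \<longrightarrow> st x y"
  shows "(\<forall>k::nat. \<exists>X\<subseteq>D. finite X \<and> card X = k \<and> is_chain_on st X \<and> is_antichain_on wk X)
     \<longleftrightarrow> (\<forall>k::nat. \<exists>X\<subseteq>D. finite X \<and> is_chain_on st X \<and> \<not> union_of_k_chains wk k X)"
proof (intro iffI allI)
  fix k :: nat
  assume "\<forall>k. \<exists>X\<subseteq>D. finite X \<and> card X = k \<and> is_chain_on st X \<and> is_antichain_on wk X"
  then obtain X where X: "X \<subseteq> D" "finite X" "card X = Suc k" "is_chain_on st X" "is_antichain_on wk X"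
    by blast
  have "Suc k \<le> width wk X" using card_antichain_le_width[OF X(2) order_refl X(5)] X(3) by simp
  then have "\<not> union_of_k_chains wk k X" using width_le_if_union_of_k_chains[OF X(2)] by fastforce
  then show "\<exists>X\<subseteq>D. finite X \<and> is_chain_on st X \<and> \<not> union_of_k_chains wk k X" using X by blast
next
  fix k :: nat
  assume "\<forall>k. \<exists>X\<subseteq>D. finite X \<and> is_chain_on st X \<and> \<not> union_of_k_chains wk k X"
  then obtain X where X: "X \<subseteq> D" "finite X" "is_chain_on st X" "\<not> union_of_k_chains wk k X"
    by blast
  have "k \<le> width wk X" using union_of_k_chains_iff_width_le[OF assms(2) X(2,1)] X(4) by simp
  moreover obtain A where A: "A \<subseteq> X" "is_antichain_on wk A" "card A = width wk X"
    using width_attained[OF X(2)] by blast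
  ultimately obtain B where B: "B \<subseteq> A" "card B = k" by (metis obtain_subset_with_card_n)
  have "B \<subseteq> X" using A(1) B(1) by blast
  then have "B \<subseteq> D" "finite B" "is_chain_on st B"
    using X(1,2) finite_subset chain_on_subset[OF X(3)] by auto
  then show "\<exists>X\<subseteq>D. finite X \<and> card X = k \<and> is_chain_on st X \<and> is_antichain_on wk X"
    using B(2) antichain_on_subset[OF A(2) B(1)] by blast
qed

end
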